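(* Let $W$ be a skew-symmetric weighing matrix of order $n\equiv 0\pmod 4$ and weight $m\equiv 3\pmod 8$, i.e. an $n\times n$ matrix with entries in $\{0,1,-1\}$ satisfying $W^T=-W$ and $WW^T=mI$. Let $\tilde{C}_4(W)$ be the $\mathbb{Z}_4$-code of length $2n$ with generator matrix $(I\ \ W+2I)$, entries read modulo $4$. Let $a,b,c,d$ be integers with $c\equiv 2a+b\pmod 4$ and $d\equiv a+2b\pmod 4$. Then $\tilde{C}_4(W)$ is a Type~II $\mathbb{Z}_4$-code, $A_4(\tilde{C}_4(W))$ is an even unimodular lattice, and the $2n$ rows of the matrix \[ \tilde{F}(W)=\frac{1}{2}\begin{pmatrix} aI+bW & cI+dW\\ -cI+dW & aI-bW\end{pmatrix} \] form a $\frac{1}{4}(a^2+mb^2+c^2+md^2)$-frame of $A_4(\tilde{C}_4(W))$.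
   Context: A $\mathbb{Z}_k$-code of length $N$ is a $\mathbb{Z}_k$-submodule of $\mathbb{Z}_k^N$. A Type~II $\mathbb{Z}_4$-code is a self-dual $\mathbb{Z}_4$-code (equal to its dual under the standard inner product) all of whose codewords have Euclidean weight divisible by $8$, where the Euclidean weight of $x$ is $n_1(x)+4n_2(x)$, with $n_1(x)$ the number of coordinates equal to $\pm1$ and $n_2(x)$ the number equal to $2$. Construction A: with $\rho:\mathbb{Z}_k\to\mathbb{Z}$ sending $0,1,\dots,k-1$ to $0,1,\dots,k-1$, for a $\mathbb{Z}_k$-code $C$ of length $N$ set $A_k(C)=\frac{1}{\sqrt{k}}\{\rho(C)+k\mathbb{Z}^N\}$. For a lattice $L$ in dimension $N$, a set $\{f_1,\dots,f_N\}$ of vectors of $L$ with $(f_i,f_j)=t\,\delta_{i,j}$ is called a $t$-frame of $L$. A lattice $L$ is even unimodular if it equals its dual and all norms $(x,x)$, $x\in L$, are even. *)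

theory Defs
  imports Complex_Main "Jordan_Normal_Form.Matrix"
begin

text \<open>Elements of Z_k are represented by their integer representatives 0,...,k-1,
 so the map rho of Construction A is simply the inclusion of integers into reals.\<close>

definition Zk_space :: "int \<Rightarrow> nat \<Rightarrow> int vec set" where
  "Zk_space k N = {x \<in> carrier_vec N. \<forall>i<N. 0 \<le> x $ i \<and> x $ i < k}"

definition is_Zk_code :: "int \<Rightarrow> nat \<Rightarrow> int vec set \<Rightarrow> bool" where
  "is_Zk_code k N C \<longleftrightarrow> C \<subseteq> Zk_space k N \<and> 0\<^sub>v N \<in> C
     \<and> (\<forall>x\<in>C. \<forall>y\<in>C. map_vec (\<lambda>t. t mod k) (x + y) \<in> C)
     \<and> (\<forall>x\<in>C. \<forall>r::int. map_vec (\<lambda>t. (r * t) mod k) x \<in> C)"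

definition dual_code :: "int \<Rightarrow> nat \<Rightarrow> int vec set \<Rightarrow> int vec set" where
  "dual_code k N C = {x \<in> Zk_space k N. \<forall>y\<in>C. (x \<bullet> y) mod k = 0}"

definition euclid_weight :: "int vec \<Rightarrow> nat" where
  "euclid_weight x = card {i. i < dim_vec x \<and> (x $ i = 1 \<or> x $ i = 3)}
                     + 4 * card {i. i < dim_vec x \<and> x $ i = 2}"

definition type_II_Z4 :: "nat \<Rightarrow> int vec set \<Rightarrow> bool" where
  "type_II_Z4 N C \<longleftrightarrow> is_Zk_code 4 N C \<and> C = dual_code 4 N C
     \<and> (\<forall>x\<in>C. 8 dvd euclid_weight x)"

definition constrA :: "int \<Rightarrow> nat \<Rightarrow> int vec set \<Rightarrow> real vec set" where
  "constrA k N C = {(1 / sqrt (real_of_int k)) \<cdot>\<^sub>v map_vec real_of_int (c + k \<cdot>\<^sub>v z)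
                    | c z. c \<in> C \<and> z \<in> carrier_vec N}"

definition dual_lattice :: "nat \<Rightarrow> real vec set \<Rightarrow> real vec set" where
  "dual_lattice N L = {y \<in> carrier_vec N. \<forall>x\<in>L. y \<bullet> x \<in> \<int>}"

definition even_unimodular :: "nat \<Rightarrow> real vec set \<Rightarrow> bool" where
  "even_unimodular N L \<longleftrightarrow> L = dual_lattice N L
     \<and> (\<forall>x\<in>L. \<exists>j::int. x \<bullet> x = 2 * real_of_int j)"

definition is_frame :: "real \<Rightarrow> nat \<Rightarrow> real vec set \<Rightarrow> (nat \<Rightarrow> real vec) \<Rightarrow> bool" where
  "is_frame t N L f \<longleftrightarrow> (\<forall>i<N. f i \<in> L)
     \<and> (\<forall>i<N. \<forall>j<N. f i \<bullet> f j = (if i = j then t else 0))"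

definition skew_weighing :: "nat \<Rightarrow> nat \<Rightarrow> int mat \<Rightarrow> bool" where
  "skew_weighing n m W \<longleftrightarrow> W \<in> carrier_mat n n
     \<and> (\<forall>i<n. \<forall>j<n. W $$ (i, j) \<in> {0, 1, -1})
     \<and> transpose_mat W = - W
     \<and> W * transpose_mat W = of_nat m \<cdot>\<^sub>m 1\<^sub>m n"

text \<open>Generator matrix (I | W + 2I) and the Z_4-code it generates (row span mod 4).\<close>
definition gen_C4 :: "nat \<Rightarrow> int mat \<Rightarrow> int mat" where
  "gen_C4 n W = four_block_mat (1\<^sub>m n) (W + 2 \<cdot>\<^sub>m 1\<^sub>m n) (0\<^sub>m 0 n) (0\<^sub>m 0 n)"

definition C4_tilde :: "nat \<Rightarrow> int mat \<Rightarrow> int vec set" where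
  "C4_tilde n W = {map_vec (\<lambda>t. t mod 4) (transpose_mat (gen_C4 n W) *\<^sub>v u)
                   | u. u \<in> carrier_vec n}"

definition F_tilde :: "nat \<Rightarrow> int mat \<Rightarrow> int \<Rightarrow> int \<Rightarrow> int \<Rightarrow> int \<Rightarrow> real mat" where
  "F_tilde n W a b c d = (1/2 :: real) \<cdot>\<^sub>m map_mat real_of_int
     (four_block_mat (a \<cdot>\<^sub>m 1\<^sub>m n + b \<cdot>\<^sub>m W) (c \<cdot>\<^sub>m 1\<^sub>m n + d \<cdot>\<^sub>m W)
                     ((- c) \<cdot>\<^sub>m 1\<^sub>m n + d \<cdot>\<^sub>m W) (a \<cdot>\<^sub>m 1\<^sub>m n - b \<cdot>\<^sub>m W))"

end

theory Submission
  imports Defs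
begin

text \<open>An integer vector \<open>y = (u, v)\<close> of length \<open>2n\<close> reduces modulo 4 to a codeword of
  \<open>C4_tilde n W\<close> iff \<open>v \<equiv> u (W + 2I) (mod 4)\<close>; call such \<open>y\<close> a lift. Then
  \<open>A\<^sub>4(C4_tilde n W)\<close> is half the set of lifts, and all three claims become statements
  about lifts. Skew-symmetry and \<open>W W\<^sup>T = m I\<close> give \<open>(W + 2I)(W + 2I)\<^sup>T = (m + 4) I\<close>, so for
  lifts \<open>y, y'\<close> one gets \<open>y \<cdot> y' \<equiv> (m + 5) u \<cdot> u' (mod 4)\<close> and \<open>y \<cdot> y \<equiv> (m + 5) u \<cdot> u (mod 8)\<close>;
  as \<open>m \<equiv> 3 (mod 8)\<close>, the code is self-orthogonal and doubly even and the lattice is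
  integral and even. Conversely, orthogonality modulo 4 to the generator rows
  \<open>(e\<^sub>l, e\<^sub>l (W + 2I))\<close> says \<open>u \<equiv> - v (2I - W)\<close>, whence
  \<open>u (W + 2I) \<equiv> - v (4I + W W\<^sup>T) = -(m + 4) v \<equiv> v\<close>; this gives self-duality and
  unimodularity. Finally, the rows of \<open>2 F_tilde n W a b c d\<close> are lifts precisely because of
  the congruences on \<open>c\<close> and \<open>d\<close>, and the same Gram identity makes them pairwise
  orthogonal of norm \<open>a\<^sup>2 + c\<^sup>2 + m (b\<^sup>2 + d\<^sup>2)\<close>.\<close>

section \<open>Skew-symmetric weighing matrices\<close>

lemma skew_weighing_carrier: "skew_weighing n m W \<Longrightarrow> W \<in> carrier_mat n n"
  unfolding skew_weighing_def by blast

lemma skew_weighing_skew: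
  assumes "skew_weighing n m W" "i < n" "j < n"
  shows "W $$ (j, i) = - W $$ (i, j)"
proof -
  have "transpose_mat W $$ (i, j) = (- W) $$ (i, j)"
    using assms(1) unfolding skew_weighing_def by simp
  thus ?thesis using skew_weighing_carrier[OF assms(1)] assms(2,3) by simp
qed

lemma skew_weighing_rows_orthogonal:
  assumes "skew_weighing n m W" "i < n" "j < n"
  shows "(\<Sum>k<n. W $$ (i, k) * W $$ (j, k)) = (if i = j then int m else 0)"
proof -
  have "W * transpose_mat W = of_nat m \<cdot>\<^sub>m 1\<^sub>m n"
    using assms(1) unfolding skew_weighing_def by blast
  hence "(W * transpose_mat W) $$ (i, j) = (of_nat m \<cdot>\<^sub>m 1\<^sub>m n) $$ (i, j)" by simp
  moreover have "(W * transpose_mat W) $$ (i, j) = (\<Sum>k<n. W $$ (i, k) * W $$ (j, k))"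
    using skew_weighing_carrier[OF assms(1)] assms(2,3)
    by (simp add: scalar_prod_def atLeast0LessThan)
  ultimately show ?thesis using assms(2,3) by simp
qed

lemma skew_weighing_cols_orthogonal:
  assumes "skew_weighing n m W" "i < n" "j < n"
  shows "(\<Sum>k<n. W $$ (k, i) * W $$ (k, j)) = (if i = j then int m else 0)"
proof -
  have "(\<Sum>k<n. W $$ (k, i) * W $$ (k, j)) = (\<Sum>k<n. W $$ (i, k) * W $$ (j, k))"
    using assms by (intro sum.cong refl) (simp add: skew_weighing_skew[OF assms(1), of _ i]
        skew_weighing_skew[OF assms(1), of _ j])
  thus ?thesis using skew_weighing_rows_orthogonal[OF assms] by simp
qed

section \<open>Integer lifts of the codewords\<close>

definition times_W2I :: "nat \<Rightarrow> int mat \<Rightarrow> (nat \<Rightarrow> int) \<Rightarrow> nat \<Rightarrow> int" where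
  "times_W2I n W p j = 2 * p j + (\<Sum>i<n. W $$ (i, j) * p i)"

definition C4_lift :: "nat \<Rightarrow> int mat \<Rightarrow> int vec \<Rightarrow> bool" where
  "C4_lift n W y \<longleftrightarrow> dim_vec y = 2 * n
     \<and> (\<forall>j<n. (4::int) dvd (y $ (n + j) - times_W2I n W (\<lambda>i. y $ i) j))"

lemma times_W2I_cong:
  "(\<And>i. i < n \<Longrightarrow> p i = q i) \<Longrightarrow> j < n \<Longrightarrow> times_W2I n W p j = times_W2I n W q j"
  unfolding times_W2I_def by (metis (no_types, lifting) lessThan_iff sum.cong)

lemma times_W2I_add: "times_W2I n W (\<lambda>i. p i + q i) j = times_W2I n W p j + times_W2I n W q j"
  by (simp add: times_W2I_def sum.distrib algebra_simps)

lemma times_W2I_smult: "times_W2I n W (\<lambda>i. r * p i) j = r * times_W2I n W p j"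
  by (simp add: times_W2I_def sum_distrib_left algebra_simps)

lemma times_W2I_dvd_diff:
  assumes "\<And>i. i < n \<Longrightarrow> k dvd (p i - q i)" "j < n"
  shows "k dvd (times_W2I n W p j - times_W2I n W q j)"
proof -
  have "times_W2I n W p j - times_W2I n W q j = 2 * (p j - q j) + (\<Sum>i<n. W $$ (i, j) * (p i - q i))"
    by (simp add: times_W2I_def sum_subtractf right_diff_distrib)
  moreover have "k dvd 2 * (p j - q j)" using assms by (intro dvd_mult) simp
  moreover have "k dvd (\<Sum>i<n. W $$ (i, j) * (p i - q i))" using assms by (intro dvd_sum) simp
  ultimately show ?thesis by simp
qed

lemma skew_weighing_inner_times_W:
  assumes "skew_weighing n m W"
  shows "(\<Sum>j<n. (\<Sum>i<n. W $$ (i, j) * p i) * (\<Sum>k<n. W $$ (k, j) * q k))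
    = int m * (\<Sum>j<n. p j * q j)"
proof -
  have "(\<Sum>j<n. (\<Sum>i<n. W $$ (i, j) * p i) * (\<Sum>k<n. W $$ (k, j) * q k))
      = (\<Sum>j<n. \<Sum>i<n. \<Sum>k<n. W $$ (i, j) * W $$ (k, j) * (p i * q k))"
    unfolding sum_product by (intro sum.cong refl) (simp add: ac_simps)
  also have "\<dots> = (\<Sum>i<n. \<Sum>k<n. \<Sum>j<n. W $$ (i, j) * W $$ (k, j) * (p i * q k))"
    by (subst sum.swap) (intro sum.cong refl sum.swap)
  also have "\<dots> = (\<Sum>i<n. \<Sum>k<n. (if i = k then int m else 0) * (p i * q k))"
    by (intro sum.cong refl)
      (simp add: sum_distrib_right[symmetric] skew_weighing_rows_orthogonal[OF assms])
  also have "\<dots> = (\<Sum>i<n. \<Sum>k<n. if i = k then int m * (p i * q k) else 0)"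
    by (intro sum.cong refl) simp
  also have "\<dots> = (\<Sum>i<n. int m * (p i * q i))"
    by simp
  finally show ?thesis by (simp add: sum_distrib_left)
qed

lemma skew_weighing_times_W_antisymmetric:
  assumes "skew_weighing n m W"
  shows "(\<Sum>j<n. q j * (\<Sum>i<n. W $$ (i, j) * p i)) = - (\<Sum>j<n. p j * (\<Sum>i<n. W $$ (i, j) * q i))"
proof -
  have "(\<Sum>j<n. q j * (\<Sum>i<n. W $$ (i, j) * p i)) = (\<Sum>j<n. \<Sum>i<n. q j * W $$ (i, j) * p i)"
    by (simp add: sum_distrib_left mult_ac)
  also have "\<dots> = (\<Sum>i<n. \<Sum>j<n. - (p i * W $$ (j, i) * q j))"
  proof (subst sum.swap, intro sum.cong refl)
    fix i j assume "i \<in> {..<n}" "j \<in> {..<n}"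
    thus "q j * W $$ (i, j) * p i = - (p i * W $$ (j, i) * q j)"
      using skew_weighing_skew[OF assms, of j i] by simp
  qed
  also have "\<dots> = - (\<Sum>j<n. p j * (\<Sum>i<n. W $$ (i, j) * q i))"
    by (simp add: sum_negf sum_distrib_left mult_ac)
  finally show ?thesis .
qed

text \<open>The Gram identity \<open>(W + 2I)(W + 2I)\<^sup>T = (m + 4) I\<close>: the cross terms \<open>2 (W + W\<^sup>T)\<close>
  vanish by skew-symmetry.\<close>

lemma skew_weighing_times_W2I_inner:
  assumes W: "skew_weighing n m W"
  shows "(\<Sum>j<n. times_W2I n W p j * times_W2I n W q j) = (4 + int m) * (\<Sum>j<n. p j * q j)"
proof -
  define S where "S f j = (\<Sum>i<n. W $$ (i, j) * f i)" for f j
  have "(\<Sum>j<n. times_W2I n W p j * times_W2I n W q j)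
      = (\<Sum>j<n. 4 * (p j * q j) + 2 * (p j * S q j) + 2 * (q j * S p j) + S p j * S q j)"
    unfolding times_W2I_def S_def by (intro sum.cong refl) (simp add: ring_distribs)
  also have "\<dots> = 4 * (\<Sum>j<n. p j * q j) + 2 * (\<Sum>j<n. p j * S q j)
      + 2 * (\<Sum>j<n. q j * S p j) + (\<Sum>j<n. S p j * S q j)"
    by (simp only: sum.distrib sum_distrib_left)
  finally show ?thesis
    unfolding S_def skew_weighing_inner_times_W[OF W]
      skew_weighing_times_W_antisymmetric[OF W, where p = p and q = q]
    by (simp add: distrib_right)
qed

lemma C4_lift_dimD: "C4_lift n W y \<Longrightarrow> dim_vec y = 2 * n"
  unfolding C4_lift_def by blast

lemma C4_lift_cong_mod4:
  assumes "C4_lift n W y" "dim_vec y' = 2 * n" "\<And>i. i < 2 * n \<Longrightarrow> (4::int) dvd (y $ i - y' $ i)"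
  shows "C4_lift n W y'"
  unfolding C4_lift_def
proof (intro conjI allI impI)
  fix j assume j: "j < n"
  have "4 dvd (y $ (n + j) - times_W2I n W (\<lambda>i. y $ i) j)"
    using assms(1) j unfolding C4_lift_def by blast
  moreover have "4 dvd (y $ (n + j) - y' $ (n + j))" using assms(3) j by simp
  moreover have "4 dvd (times_W2I n W (\<lambda>i. y $ i) j - times_W2I n W (\<lambda>i. y' $ i) j)"
    using assms(3) j by (intro times_W2I_dvd_diff) simp_all
  moreover have "y' $ (n + j) - times_W2I n W (\<lambda>i. y' $ i) j
      = (y $ (n + j) - times_W2I n W (\<lambda>i. y $ i) j) - (y $ (n + j) - y' $ (n + j))
        + (times_W2I n W (\<lambda>i. y $ i) j - times_W2I n W (\<lambda>i. y' $ i) j)"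
    by simp
  ultimately show "4 dvd (y' $ (n + j) - times_W2I n W (\<lambda>i. y' $ i) j)"
    by (metis dvd_add dvd_diff)
qed (rule assms(2))

lemma C4_lift_mod4: "C4_lift n W y \<Longrightarrow> C4_lift n W (map_vec (\<lambda>t. t mod 4) y)"
  by (rule C4_lift_cong_mod4) (auto simp: C4_lift_def mod_eq_dvd_iff[symmetric])

lemma C4_lift_zero: "C4_lift n W (0\<^sub>v (2 * n))"
  unfolding C4_lift_def by (simp add: times_W2I_def)

lemma C4_lift_add:
  assumes "C4_lift n W x" "C4_lift n W y"
  shows "C4_lift n W (x + y)"
  unfolding C4_lift_def
proof (intro conjI allI impI)
  show "dim_vec (x + y) = 2 * n" using assms by (simp add: C4_lift_def)
  fix j assume j: "j < n"
  have "times_W2I n W (\<lambda>i. (x + y) $ i) j = times_W2I n W (\<lambda>i. x $ i + y $ i) j"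
    using assms j by (intro times_W2I_cong) (auto simp: C4_lift_def)
  hence "(x + y) $ (n + j) - times_W2I n W (\<lambda>i. (x + y) $ i) j
      = (x $ (n + j) - times_W2I n W (\<lambda>i. x $ i) j) + (y $ (n + j) - times_W2I n W (\<lambda>i. y $ i) j)"
    using assms j by (simp add: times_W2I_add C4_lift_def)
  moreover have "4 dvd (x $ (n + j) - times_W2I n W (\<lambda>i. x $ i) j)"
    "4 dvd (y $ (n + j) - times_W2I n W (\<lambda>i. y $ i) j)"
    using assms j unfolding C4_lift_def by blast+
  ultimately show "4 dvd ((x + y) $ (n + j) - times_W2I n W (\<lambda>i. (x + y) $ i) j)"
    by (metis dvd_add)
qed

lemma C4_lift_smult:
  assumes "C4_lift n W x"
  shows "C4_lift n W (r \<cdot>\<^sub>v x)"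
  unfolding C4_lift_def
proof (intro conjI allI impI)
  show "dim_vec (r \<cdot>\<^sub>v x) = 2 * n" using assms by (simp add: C4_lift_def)
  fix j assume j: "j < n"
  have "times_W2I n W (\<lambda>i. (r \<cdot>\<^sub>v x) $ i) j = times_W2I n W (\<lambda>i. r * x $ i) j"
    using assms j by (intro times_W2I_cong) (auto simp: C4_lift_def)
  hence "(r \<cdot>\<^sub>v x) $ (n + j) - times_W2I n W (\<lambda>i. (r \<cdot>\<^sub>v x) $ i) j
      = r * (x $ (n + j) - times_W2I n W (\<lambda>i. x $ i) j)"
    using assms j by (simp add: times_W2I_smult C4_lift_def right_diff_distrib)
  moreover have "4 dvd (x $ (n + j) - times_W2I n W (\<lambda>i. x $ i) j)"
    using assms j unfolding C4_lift_def by blast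
  ultimately show "4 dvd ((r \<cdot>\<^sub>v x) $ (n + j) - times_W2I n W (\<lambda>i. (r \<cdot>\<^sub>v x) $ i) j)"
    by (metis dvd_mult)
qed

lemma sum_lessThan_double:
  "(\<Sum>i<2 * (n::nat). f i) = (\<Sum>i<n. f i) + (\<Sum>i<n. f (n + i) :: 'a :: comm_monoid_add)"
proof -
  have "(\<Sum>i<2 * n. f i) = (\<Sum>i\<in>{0..<n}. f i) + (\<Sum>i\<in>{n..<n + n}. f i)"
    by (simp add: mult_2 sum.atLeastLessThan_concat lessThan_atLeast0)
  also have "(\<Sum>i\<in>{n..<n + n}. f i) = (\<Sum>i\<in>{0..<n}. f (n + i))"
    using sum.shift_bounds_nat_ivl[of f 0 n n] by (simp add: add.commute)
  finally show ?thesis by (simp add: lessThan_atLeast0)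
qed

lemma scalar_prod_split_halves:
  fixes x y :: "'a :: comm_semiring_1 vec"
  assumes "dim_vec y = 2 * n"
  shows "x \<bullet> y = (\<Sum>j<n. x $ j * y $ j) + (\<Sum>j<n. x $ (n + j) * y $ (n + j))"
  unfolding scalar_prod_def assms atLeast0LessThan by (rule sum_lessThan_double)

lemma C4_lift_inner_expansion:
  assumes W: "skew_weighing n m W" and y: "C4_lift n W y" and y': "C4_lift n W y'"
  defines "r \<equiv> \<lambda>j. (y $ (n + j) - times_W2I n W (\<lambda>i. y $ i) j) div 4"
    and "r' \<equiv> \<lambda>j. (y' $ (n + j) - times_W2I n W (\<lambda>i. y' $ i) j) div 4"
  shows "y \<bullet> y' = (5 + int m) * (\<Sum>j<n. y $ j * y' $ j)
     + 4 * (\<Sum>j<n. r j * times_W2I n W (\<lambda>i. y' $ i) j + times_W2I n W (\<lambda>i. y $ i) j * r' j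
            + 4 * r j * r' j)"
proof -
  let ?P = "times_W2I n W (\<lambda>i. y $ i)" and ?Q = "times_W2I n W (\<lambda>i. y' $ i)"
  have right: "y $ (n + j) = ?P j + 4 * r j" "y' $ (n + j) = ?Q j + 4 * r' j" if "j < n" for j
    using y y' that unfolding C4_lift_def r_def r'_def by auto
  have "(\<Sum>j<n. y $ (n + j) * y' $ (n + j))
      = (\<Sum>j<n. ?P j * ?Q j + 4 * (r j * ?Q j + ?P j * r' j + 4 * r j * r' j))"
    by (intro sum.cong refl) (simp add: right ring_distribs)
  also have "\<dots> = (4 + int m) * (\<Sum>j<n. y $ j * y' $ j)
      + 4 * (\<Sum>j<n. r j * ?Q j + ?P j * r' j + 4 * r j * r' j)"
    by (simp add: sum.distrib sum_distrib_left skew_weighing_times_W2I_inner[OF W])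
  finally show ?thesis
    using scalar_prod_split_halves[OF C4_lift_dimD[OF y'], of y] by (simp add: algebra_simps)
qed

lemma C4_lift_inner_dvd4:
  assumes "skew_weighing n m W" "m mod 8 = 3" "C4_lift n W y" "C4_lift n W y'"
  shows "4 dvd (y \<bullet> y')"
proof -
  have "(4::int) dvd (5 + int m)" using assms(2) by presburger
  thus ?thesis unfolding C4_lift_inner_expansion[OF assms(1,3,4)] by simp
qed

lemma C4_lift_norm_dvd8:
  assumes "skew_weighing n m W" "m mod 8 = 3" "C4_lift n W y"
  shows "8 dvd (y \<bullet> y)"
proof -
  define r where "r = (\<lambda>j. (y $ (n + j) - times_W2I n W (\<lambda>i. y $ i) j) div 4)"
  let ?P = "times_W2I n W (\<lambda>i. y $ i)"
  have "(8::int) dvd (5 + int m)" using assms(2) by presburger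
  moreover have "(\<Sum>j<n. r j * ?P j + ?P j * r j + 4 * r j * r j)
      = 2 * (\<Sum>j<n. r j * ?P j + 2 * r j * r j)"
    by (simp add: sum_distrib_left algebra_simps)
  hence "y \<bullet> y = (5 + int m) * (\<Sum>j<n. y $ j * y $ j) + 8 * (\<Sum>j<n. r j * ?P j + 2 * r j * r j)"
    unfolding C4_lift_inner_expansion[OF assms(1,3,3)] r_def by simp
  ultimately show ?thesis by simp
qed

section \<open>The code \<open>C4_tilde n W\<close>\<close>

definition encode :: "nat \<Rightarrow> int mat \<Rightarrow> int vec \<Rightarrow> int vec" where
  "encode n W u = vec (2 * n) (\<lambda>j. if j < n then u $ j else times_W2I n W (\<lambda>i. u $ i) (j - n))"

lemma gen_C4_transpose_mult_vec:
  assumes W: "W \<in> carrier_mat n n" and u: "u \<in> carrier_vec n"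
  shows "transpose_mat (gen_C4 n W) *\<^sub>v u = encode n W u"
proof (rule eq_vecI)
  fix j assume "j < dim_vec (encode n W u)"
  hence j: "j < 2 * n" "j - n < n" by (simp_all add: encode_def)
  have "(transpose_mat (gen_C4 n W) *\<^sub>v u) $ j = (\<Sum>i<n. gen_C4 n W $$ (i, j) * u $ i)"
    using W u j by (simp add: gen_C4_def scalar_prod_def atLeast0LessThan)
  also have "\<dots> = (if j < n then (\<Sum>i<n. (if i = j then 1 else 0) * u $ i)
      else (\<Sum>i<n. (W $$ (i, j - n) + 2 * (if i = j - n then 1 else 0)) * u $ i))"
    using W j by (auto simp: gen_C4_def intro: sum.cong)
  also have "\<dots> = encode n W u $ j"
    using j by (simp add: encode_def times_W2I_def sum.distrib ring_distribs mult.assoc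
        if_distrib[of "\<lambda>x. x * _"] if_distrib[of "\<lambda>x. 2 * x"] cong: if_cong)
  finally show "(transpose_mat (gen_C4 n W) *\<^sub>v u) $ j = encode n W u $ j" .
qed (use W in \<open>simp add: gen_C4_def encode_def\<close>)

lemma C4_lift_encode: "C4_lift n W (encode n W u)"
  unfolding C4_lift_def
proof (intro conjI allI impI)
  fix j assume "j < n"
  moreover have "times_W2I n W (\<lambda>i. encode n W u $ i) j = times_W2I n W (\<lambda>i. u $ i) j"
    using \<open>j < n\<close> by (intro times_W2I_cong) (simp_all add: encode_def)
  ultimately show "4 dvd (encode n W u $ (n + j) - times_W2I n W (\<lambda>i. encode n W u $ i) j)"
    by (simp add: encode_def)
qed (simp add: encode_def)

lemma Zk_space_iff: "x \<in> Zk_space k N \<longleftrightarrow> dim_vec x = N \<and> (\<forall>i<N. 0 \<le> x $ i \<and> x $ i < k)"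
  unfolding Zk_space_def carrier_dim_vec by simp

lemma encode_left_half_mod4:
  assumes x: "x \<in> Zk_space 4 (2 * n)" and lift: "C4_lift n W x"
  shows "map_vec (\<lambda>t. t mod 4) (encode n W (vec n (\<lambda>i. x $ i))) = x"
proof (rule eq_vecI)
  fix j assume "j < dim_vec x"
  hence j: "j < 2 * n" and range: "0 \<le> x $ j" "x $ j < 4" using x by (auto simp: Zk_space_iff)
  show "map_vec (\<lambda>t. t mod 4) (encode n W (vec n (\<lambda>i. x $ i))) $ j = x $ j"
  proof (cases "j < n")
    case False
    define k where "k = j - n"
    have k: "k < n" "j = n + k" using j False unfolding k_def by auto
    have "times_W2I n W (\<lambda>i. vec n (\<lambda>i. x $ i) $ i) k = times_W2I n W (\<lambda>i. x $ i) k"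
      using k by (intro times_W2I_cong) simp_all
    moreover have "4 dvd (x $ (n + k) - times_W2I n W (\<lambda>i. x $ i) k)"
      using lift k unfolding C4_lift_def by blast
    ultimately have "times_W2I n W (\<lambda>i. vec n (\<lambda>i. x $ i) $ i) k mod 4 = x $ j mod 4"
      using k by (simp add: mod_eq_dvd_iff dvd_diff_commute)
    thus ?thesis using j k range by (simp add: encode_def)
  qed (use j range in \<open>simp add: encode_def\<close>)
qed (use x in \<open>simp add: encode_def Zk_space_iff\<close>)

lemma C4_tilde_eq:
  assumes "W \<in> carrier_mat n n"
  shows "C4_tilde n W = {x \<in> Zk_space 4 (2 * n). C4_lift n W x}"
proof (intro equalityI subsetI)
  fix x assume "x \<in> C4_tilde n W"
  then obtain u where "u \<in> carrier_vec n" and x: "x = map_vec (\<lambda>t. t mod 4) (encode n W u)"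
    unfolding C4_tilde_def using gen_C4_transpose_mult_vec[OF assms] by auto
  have "C4_lift n W x" unfolding x by (intro C4_lift_mod4 C4_lift_encode)
  moreover have "x \<in> Zk_space 4 (2 * n)" by (simp add: x Zk_space_iff encode_def)
  ultimately show "x \<in> {x \<in> Zk_space 4 (2 * n). C4_lift n W x}" by blast
next
  fix x assume x: "x \<in> {x \<in> Zk_space 4 (2 * n). C4_lift n W x}"
  have "map_vec (\<lambda>t. t mod 4) (transpose_mat (gen_C4 n W) *\<^sub>v vec n (\<lambda>i. x $ i)) = x"
    using x encode_left_half_mod4 gen_C4_transpose_mult_vec[OF assms] by simp
  thus "x \<in> C4_tilde n W" unfolding C4_tilde_def by (metis (mono_tags, lifting) mem_Collect_eq vec_carrier)
qed

lemma is_Zk_code_C4_tilde: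
  assumes "W \<in> carrier_mat n n"
  shows "is_Zk_code 4 (2 * n) (C4_tilde n W)"
proof -
  have "map_vec (\<lambda>t. (r * t) mod 4) x = map_vec (\<lambda>t. t mod 4) (r \<cdot>\<^sub>v x)" for r and x :: "int vec"
    by auto
  thus ?thesis
    unfolding is_Zk_code_def C4_tilde_eq[OF assms]
    by (auto simp: Zk_space_iff C4_lift_zero C4_lift_mod4 C4_lift_add C4_lift_smult)
qed

lemma scalar_prod_dvd_diff:
  fixes x y z :: "int vec"
  assumes "dim_vec y = dim_vec z" "\<And>i. i < dim_vec z \<Longrightarrow> k dvd (y $ i - z $ i)"
  shows "k dvd (x \<bullet> y - x \<bullet> z)"
proof -
  have "x \<bullet> y - x \<bullet> z = (\<Sum>i\<in>{0..<dim_vec z}. x $ i * (y $ i - z $ i))"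
    unfolding scalar_prod_def assms(1) by (simp add: sum_subtractf right_diff_distrib)
  also have "k dvd \<dots>" using assms(2) by (intro dvd_sum) auto
  finally show ?thesis .
qed

lemma scalar_prod_encode_unit_vec:
  assumes "dim_vec x = 2 * n" "l < n"
  shows "x \<bullet> encode n W (unit_vec n l) = x $ l + 2 * x $ (n + l) + (\<Sum>j<n. W $$ (l, j) * x $ (n + j))"
proof -
  have right: "encode n W (unit_vec n l) $ (n + j) = 2 * (if j = l then 1 else 0) + W $$ (l, j)"
    if "j < n" for j
  proof -
    have "(\<Sum>i<n. W $$ (i, j) * unit_vec n l $ i) = (\<Sum>i<n. if i = l then W $$ (i, j) else 0)"
      by (intro sum.cong refl) (simp add: unit_vec_def)
    thus ?thesis using that assms(2) by (simp add: encode_def times_W2I_def unit_vec_def)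
  qed
  have "x \<bullet> encode n W (unit_vec n l) = (\<Sum>j<n. x $ j * encode n W (unit_vec n l) $ j)
      + (\<Sum>j<n. x $ (n + j) * encode n W (unit_vec n l) $ (n + j))"
    by (rule scalar_prod_split_halves) (simp add: encode_def)
  also have "(\<Sum>j<n. x $ j * encode n W (unit_vec n l) $ j) = (\<Sum>j<n. if j = l then x $ j else 0)"
    by (intro sum.cong refl) (simp add: encode_def unit_vec_def)
  also have "(\<Sum>j<n. x $ (n + j) * encode n W (unit_vec n l) $ (n + j))
      = (\<Sum>j<n. (if j = l then 2 * x $ (n + j) else 0) + W $$ (l, j) * x $ (n + j))"
    by (intro sum.cong refl) (simp add: right ring_distribs)
  finally show ?thesis using assms(2) by (simp add: sum.distrib)
qed

text \<open>The vector \<open>(\<lambda>l. 2 q l + \<Sum>k. W\<^sub>l\<^sub>k q k)\<close> is \<open>q (W + 2I)\<^sup>T = q (2I - W)\<close>, and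
  \<open>(2I - W)(W + 2I) = 4I - W\<^sup>2 = 4I + W W\<^sup>T\<close>.\<close>

lemma skew_weighing_times_W2I_transposed:
  assumes W: "skew_weighing n m W" and j: "j < n"
  shows "times_W2I n W (\<lambda>l. 2 * q l + (\<Sum>k<n. W $$ (l, k) * q k)) j = (4 + int m) * q j"
proof -
  have skew: "(\<Sum>i<n. W $$ (i, j) * q i) = - (\<Sum>i<n. W $$ (j, i) * q i)"
  proof -
    have "(\<Sum>i<n. W $$ (i, j) * q i) = (\<Sum>i<n. - (W $$ (j, i) * q i))"
      using skew_weighing_skew[OF W _ j] by (intro sum.cong refl) simp
    thus ?thesis by (simp add: sum_negf)
  qed
  have "(\<Sum>i<n. W $$ (i, j) * (\<Sum>k<n. W $$ (i, k) * q k))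
      = (\<Sum>i<n. \<Sum>k<n. W $$ (i, j) * W $$ (i, k) * q k)"
    by (simp add: sum_distrib_left mult.assoc)
  also have "\<dots> = (\<Sum>k<n. (\<Sum>i<n. W $$ (i, j) * W $$ (i, k)) * q k)"
    by (subst sum.swap) (simp add: sum_distrib_right)
  also have "\<dots> = (\<Sum>k<n. if j = k then int m * q k else 0)"
    using j by (intro sum.cong refl) (simp add: skew_weighing_cols_orthogonal[OF W])
  finally have WWt: "(\<Sum>i<n. W $$ (i, j) * (\<Sum>k<n. W $$ (i, k) * q k)) = int m * q j"
    using j by simp
  have "times_W2I n W (\<lambda>l. 2 * q l + (\<Sum>k<n. W $$ (l, k) * q k)) j
     = 2 * (2 * q j + (\<Sum>k<n. W $$ (j, k) * q k)) + 2 * (\<Sum>i<n. W $$ (i, j) * q i)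
       + (\<Sum>i<n. W $$ (i, j) * (\<Sum>k<n. W $$ (i, k) * q k))"
    by (simp add: times_W2I_def sum.distrib ring_distribs sum_distrib_left mult.assoc mult.left_commute)
  thus ?thesis unfolding skew WWt by (simp add: algebra_simps)
qed

lemma C4_lift_if_orthogonal_generators:
  assumes W: "skew_weighing n m W" and m: "m mod 8 = 3" and x: "dim_vec x = 2 * n"
    and orth: "\<And>l. l < n \<Longrightarrow> 4 dvd (x \<bullet> encode n W (unit_vec n l))"
  shows "C4_lift n W x"
  unfolding C4_lift_def
proof (intro conjI allI impI)
  fix j assume j: "j < n"
  define q where "q l = x $ (n + l)" for l
  define N where "N l = 2 * q l + (\<Sum>k<n. W $$ (l, k) * q k)" for l
  have "x $ l - (- N l) = x \<bullet> encode n W (unit_vec n l)" if "l < n" for l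
    using scalar_prod_encode_unit_vec[OF x that] by (simp add: N_def q_def)
  hence "4 dvd (times_W2I n W (\<lambda>i. x $ i) j - times_W2I n W (\<lambda>l. - N l) j)"
    using j orth by (intro times_W2I_dvd_diff) simp_all
  also have "times_W2I n W (\<lambda>l. - N l) j = - ((4 + int m) * q j)"
    using times_W2I_smult[of n W "- 1" N j] skew_weighing_times_W2I_transposed[OF W j]
    unfolding N_def by simp
  finally have "4 dvd (times_W2I n W (\<lambda>i. x $ i) j + (4 + int m) * q j)" by simp
  moreover have "4 dvd ((5 + int m) * q j)"
    using m by (intro dvd_mult2) presburger
  ultimately have "4 dvd ((5 + int m) * q j - (times_W2I n W (\<lambda>i. x $ i) j + (4 + int m) * q j))"
    by (rule dvd_diff[rotated])
  thus "4 dvd (x $ (n + j) - times_W2I n W (\<lambda>i. x $ i) j)"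
    by (simp add: q_def algebra_simps)
qed (rule x)

lemma C4_tilde_subset_dual:
  assumes "skew_weighing n m W" "m mod 8 = 3"
  shows "C4_tilde n W \<subseteq> dual_code 4 (2 * n) (C4_tilde n W)"
  using C4_lift_inner_dvd4[OF assms]
  unfolding dual_code_def C4_tilde_eq[OF skew_weighing_carrier[OF assms(1)]] by auto

lemma dual_subset_C4_tilde:
  assumes W: "skew_weighing n m W" and m: "m mod 8 = 3"
  shows "dual_code 4 (2 * n) (C4_tilde n W) \<subseteq> C4_tilde n W"
proof
  fix x assume "x \<in> dual_code 4 (2 * n) (C4_tilde n W)"
  hence x: "x \<in> Zk_space 4 (2 * n)" and orth: "\<forall>y\<in>C4_tilde n W. (x \<bullet> y) mod 4 = 0"
    unfolding dual_code_def by auto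
  have "C4_lift n W x"
  proof (rule C4_lift_if_orthogonal_generators[OF W m])
    fix l assume "l < n"
    let ?g = "encode n W (unit_vec n l)"
    have "map_vec (\<lambda>t. t mod 4) ?g \<in> C4_tilde n W"
      unfolding C4_tilde_def
      using gen_C4_transpose_mult_vec[OF skew_weighing_carrier[OF W], of "unit_vec n l"]
      by (metis (mono_tags, lifting) mem_Collect_eq unit_vec_carrier)
    hence "4 dvd (x \<bullet> map_vec (\<lambda>t. t mod 4) ?g)" using orth by auto
    moreover have "4 dvd (x \<bullet> ?g - x \<bullet> map_vec (\<lambda>t. t mod 4) ?g)"
      by (rule scalar_prod_dvd_diff) (simp_all add: mod_eq_dvd_iff[symmetric])
    ultimately show "4 dvd (x \<bullet> ?g)" by (metis dvd_add diff_add_cancel)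
  qed (use x in \<open>simp add: Zk_space_iff\<close>)
  thus "x \<in> C4_tilde n W" unfolding C4_tilde_eq[OF skew_weighing_carrier[OF W]] using x by blast
qed

lemma card_eq_sum_of_bool: "int (card {i. i < (N::nat) \<and> P i}) = (\<Sum>i<N. of_bool (P i))"
proof -
  have "{i. i < N \<and> P i} = {..<N} \<inter> {i. P i}" by auto
  thus ?thesis by (simp add: sum_of_bool_eq)
qed

text \<open>On the alphabet \<open>{0, 1, 2, 3}\<close> the square of an entry is its Euclidean weight, except
  that \<open>3\<^sup>2 = 9\<close> exceeds the weight 1 of the entry 3 by 8.\<close>

lemma euclid_weight_eq_norm:
  assumes "x \<in> Zk_space 4 N"
  shows "int (euclid_weight x) = x \<bullet> x - 8 * (\<Sum>i<N. of_bool (x $ i = 3))"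
proof -
  have dim: "dim_vec x = N" and entries: "\<And>i. i < N \<Longrightarrow> x $ i \<in> {0, 1, 2, 3}"
    using assms by (auto simp: Zk_space_iff)
  have "int (euclid_weight x)
      = (\<Sum>i<N. of_bool (x $ i = 1 \<or> x $ i = 3) + 4 * of_bool (x $ i = 2))"
    unfolding euclid_weight_def dim by (simp add: card_eq_sum_of_bool sum.distrib sum_distrib_left)
  also have "\<dots> = (\<Sum>i<N. x $ i * x $ i - 8 * of_bool (x $ i = 3))"
    using entries by (intro sum.cong refl) fastforce
  also have "\<dots> = x \<bullet> x - 8 * (\<Sum>i<N. of_bool (x $ i = 3))"
    unfolding scalar_prod_def dim by (simp add: sum_subtractf sum_distrib_left atLeast0LessThan)
  finally show ?thesis .
qed

lemma C4_tilde_doubly_even: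
  assumes "skew_weighing n m W" "m mod 8 = 3" "x \<in> C4_tilde n W"
  shows "8 dvd euclid_weight x"
proof -
  have x: "x \<in> Zk_space 4 (2 * n)" "C4_lift n W x"
    using assms(3) C4_tilde_eq[OF skew_weighing_carrier[OF assms(1)]] by auto
  have "8 dvd int (euclid_weight x)"
    unfolding euclid_weight_eq_norm[OF x(1)] using C4_lift_norm_dvd8[OF assms(1,2) x(2)] by simp
  thus ?thesis by presburger
qed

lemma type_II_C4_tilde:
  assumes "skew_weighing n m W" "m mod 8 = 3"
  shows "type_II_Z4 (2 * n) (C4_tilde n W)"
  unfolding type_II_Z4_def
  using is_Zk_code_C4_tilde[OF skew_weighing_carrier[OF assms(1)]] C4_tilde_subset_dual[OF assms]
    dual_subset_C4_tilde[OF assms] C4_tilde_doubly_even[OF assms] by blast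

section \<open>The lattice \<open>A\<^sub>4(C4_tilde n W)\<close>\<close>

definition half_lifts :: "nat \<Rightarrow> int mat \<Rightarrow> real vec set" where
  "half_lifts n W = {(1/2) \<cdot>\<^sub>v map_vec real_of_int y | y. C4_lift n W y}"

lemma C4_lift_iff_C4_tilde_plus_4Z:
  assumes W: "W \<in> carrier_mat n n"
  shows "C4_lift n W y \<longleftrightarrow> (\<exists>c z. y = c + 4 \<cdot>\<^sub>v z \<and> c \<in> C4_tilde n W \<and> z \<in> carrier_vec (2 * n))"
proof
  assume y: "C4_lift n W y"
  have "y = map_vec (\<lambda>t. t mod 4) y + 4 \<cdot>\<^sub>v map_vec (\<lambda>t. t div 4) y"
    by (rule eq_vecI) simp_all
  moreover have "map_vec (\<lambda>t. t mod 4) y \<in> C4_tilde n W"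
    unfolding C4_tilde_eq[OF W] using C4_lift_mod4[OF y]
    by (simp add: Zk_space_iff C4_lift_dimD[OF y])
  moreover have "map_vec (\<lambda>t. t div 4) y \<in> carrier_vec (2 * n)"
    using C4_lift_dimD[OF y] by (intro carrier_vecI) simp
  ultimately show "\<exists>c z. y = c + 4 \<cdot>\<^sub>v z \<and> c \<in> C4_tilde n W \<and> z \<in> carrier_vec (2 * n)"
    by blast
next
  assume "\<exists>c z. y = c + 4 \<cdot>\<^sub>v z \<and> c \<in> C4_tilde n W \<and> z \<in> carrier_vec (2 * n)"
  then obtain c z where y: "y = c + 4 \<cdot>\<^sub>v z" and c: "C4_lift n W c" and z: "z \<in> carrier_vec (2 * n)"
    unfolding C4_tilde_eq[OF W] by blast
  have "dim_vec c = 2 * n" "dim_vec z = 2 * n" using C4_lift_dimD[OF c] z by auto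
  thus "C4_lift n W y" unfolding y by (intro C4_lift_cong_mod4[OF c]) simp_all
qed

lemma constrA_C4_tilde_eq:
  assumes "W \<in> carrier_mat n n"
  shows "constrA 4 (2 * n) (C4_tilde n W) = half_lifts n W"
proof -
  have "sqrt (real_of_int 4) = 2" by (simp add: real_sqrt_eq_iff)
  thus ?thesis unfolding constrA_def half_lifts_def C4_lift_iff_C4_tilde_plus_4Z[OF assms]
    by auto
qed

lemma scalar_prod_half_of_int:
  fixes y z :: "int vec"
  assumes "dim_vec y = dim_vec z"
  shows "((1/2) \<cdot>\<^sub>v map_vec real_of_int y) \<bullet> ((1/2) \<cdot>\<^sub>v map_vec real_of_int z) = real_of_int (y \<bullet> z) / 4"
  using assms unfolding scalar_prod_def by (simp add: sum_divide_distrib)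

lemma of_int_divide_in_Ints_iff:
  assumes "d \<noteq> 0"
  shows "(of_int k / of_int d :: 'a :: field_char_0) \<in> \<int> \<longleftrightarrow> d dvd k"
proof
  assume "of_int k / of_int d \<in> (\<int> :: 'a set)"
  then obtain j where "of_int k / of_int d = (of_int j :: 'a)" by (auto elim: Ints_cases)
  hence "k = d * j" using assms by (simp add: divide_eq_eq flip: of_int_mult)
  thus "d dvd k" by simp
qed (use assms in auto)

lemma half_lifts_subset_dual:
  assumes "skew_weighing n m W" "m mod 8 = 3"
  shows "half_lifts n W \<subseteq> dual_lattice (2 * n) (half_lifts n W)"
proof
  fix v assume "v \<in> half_lifts n W"
  then obtain y where v: "v = (1/2) \<cdot>\<^sub>v map_vec real_of_int y" and y: "C4_lift n W y"
    unfolding half_lifts_def by blast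
  have "v \<bullet> w \<in> \<int>" if "w \<in> half_lifts n W" for w
  proof -
    obtain z where w: "w = (1/2) \<cdot>\<^sub>v map_vec real_of_int z" and z: "C4_lift n W z"
      using \<open>w \<in> half_lifts n W\<close> unfolding half_lifts_def by blast
    have vw: "v \<bullet> w = real_of_int (y \<bullet> z) / real_of_int 4"
      unfolding v w using C4_lift_dimD[OF y] C4_lift_dimD[OF z] scalar_prod_half_of_int by simp
    show ?thesis unfolding vw
      using C4_lift_inner_dvd4[OF assms y z] by (subst of_int_divide_in_Ints_iff) simp_all
  qed
  moreover have "v \<in> carrier_vec (2 * n)" using C4_lift_dimD[OF y] unfolding v by (intro carrier_vecI) simp
  ultimately show "v \<in> dual_lattice (2 * n) (half_lifts n W)" unfolding dual_lattice_def by blast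
qed

lemma dual_half_lifts_double_in_Ints:
  assumes v: "v \<in> dual_lattice (2 * n) (half_lifts n W)" and i: "i < 2 * n"
  shows "2 * v $ i \<in> \<int>"
proof -
  define e :: "int vec" where "e = 4 \<cdot>\<^sub>v unit_vec (2 * n) i"
  have "C4_lift n W e"
    by (rule C4_lift_cong_mod4[OF C4_lift_zero]) (simp_all add: e_def)
  hence "v \<bullet> ((1/2) \<cdot>\<^sub>v map_vec real_of_int e) \<in> \<int>"
    using v unfolding dual_lattice_def half_lifts_def by blast
  moreover have "v \<bullet> ((1/2) \<cdot>\<^sub>v map_vec real_of_int e) = 2 * v $ i"
  proof -
    have "v \<bullet> ((1/2) \<cdot>\<^sub>v map_vec real_of_int e) = (\<Sum>k\<in>{0..<2 * n}. if k = i then 2 * v $ i else 0)"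
      unfolding scalar_prod_def by (intro sum.cong) (auto simp: e_def unit_vec_def)
    thus ?thesis using i by simp
  qed
  ultimately show ?thesis by simp
qed

lemma dual_subset_half_lifts:
  assumes W: "skew_weighing n m W" and m: "m mod 8 = 3"
  shows "dual_lattice (2 * n) (half_lifts n W) \<subseteq> half_lifts n W"
proof
  fix v assume v: "v \<in> dual_lattice (2 * n) (half_lifts n W)"
  have dim_v: "dim_vec v = 2 * n" using v unfolding dual_lattice_def by auto
  define y where "y = vec (2 * n) (\<lambda>i. \<lfloor>2 * v $ i\<rfloor>)"
  have dim_y: "dim_vec y = 2 * n" by (simp add: y_def)
  have "real_of_int (y $ i) = 2 * v $ i" if "i < 2 * n" for i
    using dual_half_lifts_double_in_Ints[OF v that] that unfolding y_def by (auto elim: Ints_cases)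
  hence v_eq: "v = (1/2) \<cdot>\<^sub>v map_vec real_of_int y"
    by (intro eq_vecI) (auto simp: dim_v dim_y)
  have "C4_lift n W y"
  proof (rule C4_lift_if_orthogonal_generators[OF W m])
    fix l assume "l < n"
    let ?g = "encode n W (unit_vec n l)"
    have "v \<bullet> ((1/2) \<cdot>\<^sub>v map_vec real_of_int ?g) \<in> \<int>"
      using v C4_lift_encode unfolding dual_lattice_def half_lifts_def by blast
    moreover have "v \<bullet> ((1/2) \<cdot>\<^sub>v map_vec real_of_int ?g) = real_of_int (y \<bullet> ?g) / real_of_int 4"
      unfolding v_eq using scalar_prod_half_of_int[of y ?g] by (simp add: y_def encode_def)
    ultimately show "4 dvd (y \<bullet> ?g)" by (simp only: of_int_divide_in_Ints_iff)
  qed (rule dim_y)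
  thus "v \<in> half_lifts n W" unfolding v_eq half_lifts_def by blast
qed

lemma half_lifts_even:
  assumes "skew_weighing n m W" "m mod 8 = 3" "v \<in> half_lifts n W"
  shows "\<exists>j::int. v \<bullet> v = 2 * real_of_int j"
proof -
  obtain y where v: "v = (1/2) \<cdot>\<^sub>v map_vec real_of_int y" and y: "C4_lift n W y"
    using assms(3) unfolding half_lifts_def by blast
  obtain j where "y \<bullet> y = 8 * j" using C4_lift_norm_dvd8[OF assms(1,2) y] by auto
  hence "v \<bullet> v = 2 * real_of_int j" unfolding v using scalar_prod_half_of_int[of y y] by simp
  thus ?thesis by blast
qed

lemma even_unimodular_constrA_C4_tilde:
  assumes "skew_weighing n m W" "m mod 8 = 3"
  shows "even_unimodular (2 * n) (constrA 4 (2 * n) (C4_tilde n W))"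
  unfolding even_unimodular_def constrA_C4_tilde_eq[OF skew_weighing_carrier[OF assms(1)]]
  using half_lifts_subset_dual[OF assms] dual_subset_half_lifts[OF assms] half_lifts_even[OF assms]
  by blast

section \<open>The frame\<close>

definition IW_comb :: "int mat \<Rightarrow> int \<Rightarrow> int \<Rightarrow> nat \<Rightarrow> nat \<Rightarrow> int" where
  "IW_comb W \<alpha> \<beta> i k = \<alpha> * (if i = k then 1 else 0) + \<beta> * W $$ (i, k)"

definition block_row :: "nat \<Rightarrow> int mat \<Rightarrow> int \<Rightarrow> int \<Rightarrow> int \<Rightarrow> int \<Rightarrow> nat \<Rightarrow> int vec" where
  "block_row n W \<alpha> \<beta> \<gamma> \<delta> i =
     vec (2 * n) (\<lambda>k. if k < n then IW_comb W \<alpha> \<beta> i k else IW_comb W \<gamma> \<delta> i (k - n))"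

lemma IW_comb_inner:
  assumes W: "skew_weighing n m W" and i: "i < n" and j: "j < n"
  shows "(\<Sum>k<n. IW_comb W \<alpha> \<beta> i k * IW_comb W \<alpha>' \<beta>' j k)
     = (\<alpha> * \<alpha>' + int m * \<beta> * \<beta>') * (if i = j then 1 else 0) + (\<beta> * \<alpha>' - \<alpha> * \<beta>') * W $$ (i, j)"
proof -
  have "(\<Sum>k<n. IW_comb W \<alpha> \<beta> i k * IW_comb W \<alpha>' \<beta>' j k)
      = (\<Sum>k<n. (if k = i then \<alpha> * \<alpha>' * (if i = j then 1 else 0) + \<alpha> * \<beta>' * W $$ (j, i) else 0)
             + (if k = j then \<beta> * \<alpha>' * W $$ (i, j) else 0) + \<beta> * \<beta>' * (W $$ (i, k) * W $$ (j, k)))"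
    by (intro sum.cong refl) (auto simp: IW_comb_def algebra_simps)
  also have "\<dots> = \<alpha> * \<alpha>' * (if i = j then 1 else 0) + \<alpha> * \<beta>' * W $$ (j, i) + \<beta> * \<alpha>' * W $$ (i, j)
      + \<beta> * \<beta>' * (\<Sum>k<n. W $$ (i, k) * W $$ (j, k))"
    using i j by (simp add: sum.distrib sum_distrib_left)
  also have "\<dots> = (\<alpha> * \<alpha>' + int m * \<beta> * \<beta>') * (if i = j then 1 else 0) + (\<beta> * \<alpha>' - \<alpha> * \<beta>') * W $$ (i, j)"
    unfolding skew_weighing_rows_orthogonal[OF W i j] skew_weighing_skew[OF W j i]
    by (simp add: algebra_simps)
  finally show ?thesis .
qed

lemma block_row_inner:
  assumes W: "skew_weighing n m W" and i: "i < n" and j: "j < n"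
  shows "block_row n W \<alpha> \<beta> \<gamma> \<delta> i \<bullet> block_row n W \<alpha>' \<beta>' \<gamma>' \<delta>' j
     = (\<alpha> * \<alpha>' + \<gamma> * \<gamma>' + int m * (\<beta> * \<beta>' + \<delta> * \<delta>')) * (if i = j then 1 else 0)
       + (\<beta> * \<alpha>' - \<alpha> * \<beta>' + \<delta> * \<gamma>' - \<gamma> * \<delta>') * W $$ (i, j)"
proof -
  have "block_row n W \<alpha> \<beta> \<gamma> \<delta> i \<bullet> block_row n W \<alpha>' \<beta>' \<gamma>' \<delta>' j
      = (\<Sum>k<n. IW_comb W \<alpha> \<beta> i k * IW_comb W \<alpha>' \<beta>' j k)
        + (\<Sum>k<n. IW_comb W \<gamma> \<delta> i k * IW_comb W \<gamma>' \<delta>' j k)"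
    by (subst scalar_prod_split_halves[of _ n]) (simp_all add: block_row_def)
  thus ?thesis unfolding IW_comb_inner[OF W i j] by (simp add: algebra_simps)
qed

lemma times_W2I_IW_comb:
  assumes W: "skew_weighing n m W" and i: "i < n" and j: "j < n"
  shows "times_W2I n W (IW_comb W \<alpha> \<beta> i) j
    = (2 * \<alpha> - int m * \<beta>) * (if i = j then 1 else 0) + (\<alpha> + 2 * \<beta>) * W $$ (i, j)"
proof -
  have "(\<Sum>k<n. W $$ (k, j) * IW_comb W \<alpha> \<beta> i k)
      = (\<Sum>k<n. (if k = i then \<alpha> * W $$ (i, j) else 0) - \<beta> * (W $$ (i, k) * W $$ (j, k)))"
    using skew_weighing_skew[OF W _ j]
    by (intro sum.cong refl) (auto simp: IW_comb_def algebra_simps)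
  also have "\<dots> = \<alpha> * W $$ (i, j) - \<beta> * (if i = j then int m else 0)"
    using i by (simp add: sum_subtractf sum_distrib_left[symmetric] skew_weighing_rows_orthogonal[OF W i j])
  finally have sum: "(\<Sum>k<n. W $$ (k, j) * IW_comb W \<alpha> \<beta> i k) = \<alpha> * W $$ (i, j) - \<beta> * (if i = j then int m else 0)" .
  show ?thesis unfolding times_W2I_def sum by (simp add: IW_comb_def algebra_simps)
qed

lemma block_row_C4_lift:
  assumes W: "skew_weighing n m W" and i: "i < n"
    and "4 dvd (\<gamma> - (2 * \<alpha> - int m * \<beta>))" "4 dvd (\<delta> - (\<alpha> + 2 * \<beta>))"
  shows "C4_lift n W (block_row n W \<alpha> \<beta> \<gamma> \<delta> i)"
  unfolding C4_lift_def
proof (intro conjI allI impI)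
  fix j assume j: "j < n"
  have "times_W2I n W (\<lambda>k. block_row n W \<alpha> \<beta> \<gamma> \<delta> i $ k) j = times_W2I n W (IW_comb W \<alpha> \<beta> i) j"
    using j by (intro times_W2I_cong) (simp_all add: block_row_def)
  hence "block_row n W \<alpha> \<beta> \<gamma> \<delta> i $ (n + j) - times_W2I n W (\<lambda>k. block_row n W \<alpha> \<beta> \<gamma> \<delta> i $ k) j
      = (\<gamma> - (2 * \<alpha> - int m * \<beta>)) * (if i = j then 1 else 0) + (\<delta> - (\<alpha> + 2 * \<beta>)) * W $$ (i, j)"
    using j by (simp add: times_W2I_IW_comb[OF W i j] block_row_def IW_comb_def algebra_simps)
  also have "4 dvd \<dots>" using assms(3,4) by (intro dvd_add dvd_mult2)
  finally show "4 dvd (block_row n W \<alpha> \<beta> \<gamma> \<delta> i $ (n + j)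
      - times_W2I n W (\<lambda>k. block_row n W \<alpha> \<beta> \<gamma> \<delta> i $ k) j)" .
qed (simp add: block_row_def)

definition twice_F_row :: "nat \<Rightarrow> int mat \<Rightarrow> int \<Rightarrow> int \<Rightarrow> int \<Rightarrow> int \<Rightarrow> nat \<Rightarrow> int vec" where
  "twice_F_row n W a b c d i =
     (if i < n then block_row n W a b c d i else block_row n W (- c) d a (- b) (i - n))"

lemma row_F_tilde:
  assumes W: "W \<in> carrier_mat n n" and i: "i < 2 * n"
  shows "row (F_tilde n W a b c d) i = (1/2) \<cdot>\<^sub>v map_vec real_of_int (twice_F_row n W a b c d i)"
proof (rule eq_vecI)
  fix k assume "k < dim_vec ((1/2) \<cdot>\<^sub>v map_vec real_of_int (twice_F_row n W a b c d i))"
  hence k: "k < 2 * n" by (simp add: twice_F_row_def block_row_def)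
  show "row (F_tilde n W a b c d) i $ k = ((1/2) \<cdot>\<^sub>v map_vec real_of_int (twice_F_row n W a b c d i)) $ k"
    using W i k by (simp add: F_tilde_def twice_F_row_def block_row_def IW_comb_def)
qed (use W in \<open>simp add: F_tilde_def twice_F_row_def block_row_def\<close>)

lemma frame_coefficient_congruences:
  fixes a b c d :: int
  assumes m: "m mod 8 = 3" and c: "c mod 4 = (2 * a + b) mod 4" and d: "d mod 4 = (a + 2 * b) mod 4"
  shows "4 dvd (c - (2 * a - int m * b))" "4 dvd (d - (a + 2 * b))"
    "4 dvd (a - (2 * (- c) - int m * d))" "4 dvd (- b - (- c + 2 * d))"
proof -
  obtain k where k: "c = 2 * a + b + 4 * k"
    using c mod_eq_dvd_iff[of c 4 "2 * a + b"] by (auto elim!: dvdE simp: algebra_simps)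
  obtain l where l: "d = a + 2 * b + 4 * l"
    using d mod_eq_dvd_iff[of d 4 "a + 2 * b"] by (auto elim!: dvdE simp: algebra_simps)
  define t where "t = int (m div 8)"
  have t: "int m = 8 * t + 3" unfolding t_def using m by presburger
  show "4 dvd (c - (2 * a - int m * b))"
    unfolding dvd_def by (rule exI[of _ "k + (2 * t + 1) * b"]) (simp add: k t algebra_simps)
  show "4 dvd (d - (a + 2 * b))"
    unfolding dvd_def by (rule exI[of _ l]) (simp add: l algebra_simps)
  show "4 dvd (a - (2 * (- c) - int m * d))"
    unfolding dvd_def
    by (rule exI[of _ "(2 * t + 2) * a + (4 * t + 2) * b + 2 * k + (8 * t + 3) * l"])
      (simp add: k l t algebra_simps)
  show "4 dvd (- b - (- c + 2 * d))"
    unfolding dvd_def by (rule exI[of _ "- b + k - 2 * l"]) (simp add: k l algebra_simps)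
qed

lemma twice_F_row_C4_lift:
  assumes W: "skew_weighing n m W" and m: "m mod 8 = 3"
    and "c mod 4 = (2 * a + b) mod 4" "d mod 4 = (a + 2 * b) mod 4" and i: "i < 2 * n"
  shows "C4_lift n W (twice_F_row n W a b c d i)"
proof (cases "i < n")
  case True
  thus ?thesis using block_row_C4_lift[OF W True] frame_coefficient_congruences(1,2)[OF assms(2-4)]
    by (simp add: twice_F_row_def)
next
  case False
  hence "i - n < n" using i by simp
  thus ?thesis using False block_row_C4_lift[OF W] frame_coefficient_congruences(3,4)[OF assms(2-4)]
    by (simp add: twice_F_row_def)
qed

lemma twice_F_row_inner:
  assumes W: "skew_weighing n m W" and i: "i < 2 * n" and j: "j < 2 * n"
  shows "twice_F_row n W a b c d i \<bullet> twice_F_row n W a b c d j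
    = (if i = j then a^2 + c^2 + int m * (b^2 + d^2) else 0)"
proof -
  consider "i < n" "j < n" | "i < n" "\<not> j < n" | "\<not> i < n" "j < n" | "\<not> i < n" "\<not> j < n"
    by blast
  thus ?thesis
  proof cases
    case 1 thus ?thesis
      by (cases "i = j") (simp_all add: twice_F_row_def block_row_inner[OF W] power2_eq_square algebra_simps)
  next
    case 2 thus ?thesis using j
      by (simp add: twice_F_row_def block_row_inner[OF W] algebra_simps)
  next
    case 3 thus ?thesis using i
      by (simp add: twice_F_row_def block_row_inner[OF W] algebra_simps)
  next
    case 4
    hence "i - n = j - n \<longleftrightarrow> i = j" by auto
    thus ?thesis using 4 i j
      by (cases "i = j") (simp_all add: twice_F_row_def block_row_inner[OF W] power2_eq_square algebra_simps)
  qed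
qed

lemma is_frame_F_tilde:
  assumes W: "skew_weighing n m W" and m: "m mod 8 = 3"
    and "c mod 4 = (2 * a + b) mod 4" "d mod 4 = (a + 2 * b) mod 4"
  shows "is_frame ((real_of_int (a^2) + real m * real_of_int (b^2) + real_of_int (c^2)
                 + real m * real_of_int (d^2)) / 4)
               (2 * n) (constrA 4 (2 * n) (C4_tilde n W)) (\<lambda>i. row (F_tilde n W a b c d) i)"
  unfolding is_frame_def constrA_C4_tilde_eq[OF skew_weighing_carrier[OF W]]
proof (intro conjI allI impI)
  fix i assume "i < 2 * n"
  thus "row (F_tilde n W a b c d) i \<in> half_lifts n W"
    using twice_F_row_C4_lift[OF assms] row_F_tilde[OF skew_weighing_carrier[OF W]]
    unfolding half_lifts_def by blast
next
  fix i j assume i: "i < 2 * n" and j: "j < 2 * n"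
  have dims: "dim_vec (twice_F_row n W a b c d i) = dim_vec (twice_F_row n W a b c d j)"
    by (simp add: twice_F_row_def block_row_def)
  show "row (F_tilde n W a b c d) i \<bullet> row (F_tilde n W a b c d) j
      = (if i = j then (real_of_int (a^2) + real m * real_of_int (b^2) + real_of_int (c^2)
                 + real m * real_of_int (d^2)) / 4 else 0)"
    unfolding row_F_tilde[OF skew_weighing_carrier[OF W] i] row_F_tilde[OF skew_weighing_carrier[OF W] j]
      scalar_prod_half_of_int[OF dims] twice_F_row_inner[OF W i j]
    by (simp add: algebra_simps)
qed

theorem proposition3p3:
  fixes n m :: nat and W :: "int mat" and a b c d :: int
  assumes "skew_weighing n m W"
    and "n mod 4 = 0" and "m mod 8 = 3"
    and "c mod 4 = (2 * a + b) mod 4" and "d mod 4 = (a + 2 * b) mod 4"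
  shows "type_II_Z4 (2 * n) (C4_tilde n W)
    \<and> even_unimodular (2 * n) (constrA 4 (2 * n) (C4_tilde n W))
    \<and> is_frame ((real_of_int (a^2) + real m * real_of_int (b^2) + real_of_int (c^2)
                 + real m * real_of_int (d^2)) / 4)
               (2 * n) (constrA 4 (2 * n) (C4_tilde n W)) (\<lambda>i. row (F_tilde n W a b c d) i)"
  using type_II_C4_tilde[OF assms(1,3)] even_unimodular_constrA_C4_tilde[OF assms(1,3)]
    is_frame_F_tilde[OF assms(1,3,4,5)] by blast

end
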